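(* Let $G$ be of type $A_{n-1}$ and $1\le r,s\le n-1$. Then $X(w_{s,r})^{ss}_{\lambda_s}(\mathcal{L}(n\omega_r))=X(w_{s,r})^{s}_{\lambda_s}(\mathcal{L}(n\omega_r))$ if and only if $n\nmid rs$.
   Context: $G$ is the simple adjoint group of type $A_{n-1}$ with maximal torus $T$, Borel $B$, simple roots $\alpha_1,\dots,\alpha_{n-1}$, fundamental weights $\omega_i$; $\lambda_s$ the one-parameter subgroup with $\langle\alpha_j,\lambda_s\rangle=\delta_{sj}$. $P=P_{S\setminus\{\alpha_r\}}$, $W^{S\setminus\{\alpha_r\}}$ the minimal coset representatives with the Bruhat order, $X(w)=\overline{BwP/P}$, $\mathcal{L}(\chi)$ the line bundle of dominant $\chi$ on $G/P$. $w_{s,r}$ is the unique Bruhat-minimal $w\in W^{S\setminus\{\alpha_r\}}$ with $\langle w(\omega_r),\lambda_s\rangle\le0$ (the unique minimal Schubert variety with $\lambda_s$-semistable points). For $H=\lambda_s(\mathbb{G}_m)$: semistable points are those at which some $H$-invariant section of a positive power of the bundle is nonzero; stable points are semistable points with closed $H$-orbit in the semistable locus and finite stabilizer. *)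

theory Defs
  imports Complex_Main "HOL-Library.Multiset" "HOL-Combinatorics.Permutations"
begin

text \<open>Concrete model of the Grassmannian G/P (P maximal parabolic for alpha_r, G = PGL_n)
  inside the projective space of the r-th exterior power of C^n, via Pluecker coordinates
  indexed by r-subsets of {1..n}. Points of projective space are represented by nonzero
  coordinate vectors; all notions below are invariant under nonzero scaling.\<close>

definition rsubsets :: "nat \<Rightarrow> nat \<Rightarrow> nat set set" where
  "rsubsets n r = {I. I \<subseteq> {1..n} \<and> card I = r}"

definition plvec :: "nat \<Rightarrow> nat \<Rightarrow> (nat set \<Rightarrow> complex) set" where
  "plvec n r = {p. (\<forall>I. I \<notin> rsubsets n r \<longrightarrow> p I = 0) \<and> (\<exists>I. p I \<noteq> 0)}"

text \<open>Homogeneous polynomials in the Pluecker coordinates: finitely supported coefficient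
  functions on monomials (multisets of coordinate indices).\<close>

definition eval_form :: "(nat set multiset \<Rightarrow> complex) \<Rightarrow> (nat set \<Rightarrow> complex) \<Rightarrow> complex" where
  "eval_form c p = (\<Sum>M\<in>{M. c M \<noteq> 0}. c M * (\<Prod>I\<in>#M. p I))"

definition is_form :: "nat \<Rightarrow> nat \<Rightarrow> nat \<Rightarrow> ((nat set \<Rightarrow> complex) \<Rightarrow> complex) \<Rightarrow> bool" where
  "is_form n r d f \<longleftrightarrow> (\<exists>c. finite {M. c M \<noteq> 0} \<and>
      (\<forall>M. c M \<noteq> 0 \<longrightarrow> size M = d \<and> set_mset M \<subseteq> rsubsets n r) \<and> f = eval_form c)"

definition zclosed :: "nat \<Rightarrow> nat \<Rightarrow> (nat set \<Rightarrow> complex) set \<Rightarrow> bool" where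
  "zclosed n r S \<longleftrightarrow> (\<exists>F. (\<forall>f\<in>F. \<exists>d. is_form n r d f) \<and>
      S = {p \<in> plvec n r. \<forall>f\<in>F. f p = 0})"

definition zclosure :: "nat \<Rightarrow> nat \<Rightarrow> (nat set \<Rightarrow> complex) set \<Rightarrow> (nat set \<Rightarrow> complex) set" where
  "zclosure n r S = \<Inter>{Z. zclosed n r Z \<and> S \<subseteq> Z}"

text \<open>Pluecker coordinates of the span of the r columns (indexed 0..<r) of a matrix A
  (rows indexed by 1..n).\<close>

definition minor :: "(nat \<Rightarrow> nat \<Rightarrow> complex) \<Rightarrow> nat \<Rightarrow> nat set \<Rightarrow> complex" where
  "minor A r I = (\<Sum>\<sigma> | \<sigma> permutes {0..<r}.
      of_int (sign \<sigma>) * (\<Prod>k<r. A (sorted_list_of_set I ! (\<sigma> k)) k))"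

definition plucker :: "nat \<Rightarrow> nat \<Rightarrow> (nat \<Rightarrow> nat \<Rightarrow> complex) \<Rightarrow> (nat set \<Rightarrow> complex)" where
  "plucker n r A = (\<lambda>I. if I \<in> rsubsets n r then minor A r I else 0)"

text \<open>Borel subgroup: invertible upper triangular n x n matrices (its image in PGL_n has the
  same orbits).\<close>

definition borel :: "nat \<Rightarrow> (nat \<Rightarrow> nat \<Rightarrow> complex) set" where
  "borel n = {b. (\<forall>i j. j < i \<longrightarrow> b i j = 0) \<and> (\<forall>i\<in>{1..n}. b i i \<noteq> 0)}"

text \<open>A minimal coset representative w in W^{S - alpha_r} is encoded by the r-subset
  J = w({1..r}); the T-fixed point wP corresponds to the coordinate subspace spanned by
  e_j, j in J.\<close>

definition schubert_cell :: "nat \<Rightarrow> nat \<Rightarrow> nat set \<Rightarrow> (nat set \<Rightarrow> complex) set" where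
  "schubert_cell n r J = {plucker n r (\<lambda>i k. b i (sorted_list_of_set J ! k)) | b. b \<in> borel n}"

definition schubert :: "nat \<Rightarrow> nat \<Rightarrow> nat set \<Rightarrow> (nat set \<Rightarrow> complex) set" where
  "schubert n r J = zclosure n r (schubert_cell n r J)"

text \<open>Bruhat order on W^{S - alpha_r}, transported to r-subsets (Gale order).\<close>

definition bruhat_le :: "nat \<Rightarrow> nat set \<Rightarrow> nat set \<Rightarrow> bool" where
  "bruhat_le r J J' \<longleftrightarrow> (\<forall>k<r. sorted_list_of_set J ! k \<le> sorted_list_of_set J' ! k)"

text \<open>The pairing of w(omega_r) with lambda_s, where J = w({1..r}):
  w(omega_r) = sum_{i in J} eps_i - (r/n) sum_i eps_i, and lambda_s(t) = [diag(t,..,t,1,..,1)]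
  (s entries t).\<close>

definition pairing :: "nat \<Rightarrow> nat \<Rightarrow> nat \<Rightarrow> nat set \<Rightarrow> real" where
  "pairing n r s J = real (card (J \<inter> {1..s})) - real r * real s / real n"

text \<open>Action of the lift diag(t,..,t,1,..,1) of lambda_s(t) on Pluecker coordinates.\<close>

definition torus_act :: "nat \<Rightarrow> complex \<Rightarrow> (nat set \<Rightarrow> complex) \<Rightarrow> (nat set \<Rightarrow> complex)" where
  "torus_act s t p = (\<lambda>I. t ^ card (I \<inter> {1..s}) * p I)"

text \<open>Sections of L(n omega_r)^k on X are (restrictions of) forms of degree n*k in the
  Pluecker coordinates. With the canonical G_adj-linearization of L(n omega_r) = O(n),
  such a section f is lambda_s-invariant iff f(diag(t..,1..) x) = det^(k r) f(x) = t^(k r s) f(x).\<close>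

definition invariant_on :: "nat \<Rightarrow> nat \<Rightarrow> (nat set \<Rightarrow> complex) set \<Rightarrow> nat \<Rightarrow>
    ((nat set \<Rightarrow> complex) \<Rightarrow> complex) \<Rightarrow> bool" where
  "invariant_on r s X k f \<longleftrightarrow>
     (\<forall>t x. t \<noteq> 0 \<and> x \<in> X \<longrightarrow> f (torus_act s t x) = t ^ (k * r * s) * f x)"

definition semistable :: "nat \<Rightarrow> nat \<Rightarrow> nat \<Rightarrow> (nat set \<Rightarrow> complex) set \<Rightarrow> (nat set \<Rightarrow> complex) set" where
  "semistable n r s X = {x \<in> X. \<exists>k\<ge>1. \<exists>f. is_form n r (n * k) f \<and> invariant_on r s X k f \<and> f x \<noteq> 0}"

definition torus_orbit :: "nat \<Rightarrow> (nat set \<Rightarrow> complex) \<Rightarrow> (nat set \<Rightarrow> complex) set" where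
  "torus_orbit s x = {(\<lambda>I. c * torus_act s t x I) | c t. c \<noteq> 0 \<and> t \<noteq> 0}"

definition stable :: "nat \<Rightarrow> nat \<Rightarrow> nat \<Rightarrow> (nat set \<Rightarrow> complex) set \<Rightarrow> (nat set \<Rightarrow> complex) set" where
  "stable n r s X = {x \<in> semistable n r s X.
      (\<exists>Z. zclosed n r Z \<and> torus_orbit s x = Z \<inter> semistable n r s X) \<and>
      finite {t. t \<noteq> 0 \<and> (\<exists>c. torus_act s t x = (\<lambda>I. c * x I))}}"

end

theory Submission
  imports Defs "HOL-Computational_Algebra.Polynomial"
begin

text \<open>A point \<open>x\<close> is semistable when some \<open>\<lambda>\<^sub>s\<close>-invariant form \<open>f\<close> of degree \<open>n k\<close> is nonzero
  at \<open>x\<close>. Comparing coefficients in \<open>f(\<lambda>\<^sub>s(t) x) = t\<^bsup>k r s\<^esup> f(x)\<close> produces a monomial of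
  \<open>n k\<close> Pluecker coordinates, all nonzero at \<open>x\<close>, whose \<open>\<lambda>\<^sub>s\<close>-weights add up to \<open>k r s\<close>.
  If \<open>n\<close> does not divide \<open>r s\<close>, no coordinate has weight exactly \<open>r s / n\<close>, so \<open>x\<close> has
  nonzero coordinates of weight below and above \<open>r s / n\<close>. Two distinct weights make the
  stabilizer finite, and they make the orbit closed in the semistable locus: a point satisfying
  the binomial relations of \<open>x\<close> differs from \<open>x\<close> by a character of the weight lattice, which
  then has the form \<open>c t\<^bsup>weight\<^esup>\<close>. If \<open>n\<close> divides \<open>r s\<close>, Bruhat-minimality of \<open>w\<^bsub>s,r\<^esub>\<close>
  forces the coordinate \<open>p\<^sub>J\<close> of \<open>X(w\<^bsub>s,r\<^esub>)\<close> to have weight exactly \<open>r s / n\<close>, so the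
  torus-fixed point \<open>e\<^sub>J\<close> is semistable with stabilizer all of \<open>\<complex>\<^sup>*\<close>.\<close>

definition weight :: "nat \<Rightarrow> nat set \<Rightarrow> nat" where
  "weight s I = card (I \<inter> {1..s})"

lemma torus_act_weight: "torus_act s t p = (\<lambda>I. t ^ weight s I * p I)"
  by (simp add: torus_act_def weight_def)

abbreviation slist :: "nat set \<Rightarrow> nat list" where
  "slist I \<equiv> sorted_list_of_set I"

lemma finite_rsubsets: "finite (rsubsets n r)"
  unfolding rsubsets_def by (rule finite_subset[of _ "Pow {1..n}"]) auto

lemma rsubsetsD:
  assumes "I \<in> rsubsets n r"
  shows "finite I" "I \<subseteq> {1..n}" "card I = r" "set (slist I) = I" "length (slist I) = r"
    "sorted_wrt (<) (slist I)"
  using assms finite_subset[of I "{1..n}"] unfolding rsubsets_def by auto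

lemma plvec_support: "x \<in> plvec n r \<Longrightarrow> {I. x I \<noteq> 0} \<subseteq> rsubsets n r"
  unfolding plvec_def by auto

lemma plvec_cone: "p \<in> plvec n r \<Longrightarrow> c \<noteq> 0 \<Longrightarrow> (\<lambda>I. c * p I) \<in> plvec n r"
  unfolding plvec_def by auto

lemma plvec_torus_act_iff: "t \<noteq> 0 \<Longrightarrow> torus_act s t p \<in> plvec n r \<longleftrightarrow> p \<in> plvec n r"
  unfolding plvec_def torus_act_def by auto

subsection \<open>Forms in the Pluecker coordinates\<close>

lemma eval_form_superset:
  assumes "finite A" "{M. c M \<noteq> 0} \<subseteq> A"
  shows "eval_form c p = (\<Sum>M\<in>A. c M * (\<Prod>I\<in>#M. p I))"
  unfolding eval_form_def by (rule sum.mono_neutral_left) (use assms in auto)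

lemma prod_mset_torus_act:
  "(\<Prod>I\<in>#M. torus_act s t p I) = t ^ (\<Sum>I\<in>#M. weight s I) * (\<Prod>I\<in>#M. p I)"
  by (induction M) (auto simp: torus_act_weight power_add)

lemma prod_mset_scale: "(\<Prod>I\<in>#M. c * p I) = c ^ size M * (\<Prod>I\<in>#M. p I)"
  by (induction M) (simp_all add: mult_ac)

lemma is_form_homogeneous:
  assumes "is_form n r d f"
  shows "f (\<lambda>I. c * p I) = c ^ d * f p"
proof -
  obtain cf where cf: "finite {M. cf M \<noteq> 0}"
    "\<forall>M. cf M \<noteq> 0 \<longrightarrow> size M = d \<and> set_mset M \<subseteq> rsubsets n r" "f = eval_form cf"
    using assms unfolding is_form_def by blast
  have "cf M * (\<Prod>I\<in>#M. c * p I) = c ^ d * (cf M * (\<Prod>I\<in>#M. p I))" if "cf M \<noteq> 0" for M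
    using cf(2) that by (simp add: prod_mset_scale)
  then show ?thesis
    unfolding cf(3) eval_form_def sum_distrib_left by (intro sum.cong) auto
qed

lemma is_form_torus_pullback:
  assumes "is_form n r d f" "t \<noteq> 0"
  shows "is_form n r d (\<lambda>p. f (torus_act s t p))"
proof -
  obtain cf where cf: "finite {M. cf M \<noteq> 0}"
    "\<forall>M. cf M \<noteq> 0 \<longrightarrow> size M = d \<and> set_mset M \<subseteq> rsubsets n r" "f = eval_form cf"
    using assms(1) unfolding is_form_def by blast
  define cf' where "cf' M = cf M * t ^ (\<Sum>I\<in>#M. weight s I)" for M
  have supp: "{M. cf' M \<noteq> 0} = {M. cf M \<noteq> 0}"
    using assms(2) by (auto simp: cf'_def)
  have "f (torus_act s t p) = eval_form cf' p" for p
    unfolding cf(3) eval_form_def supp by (simp add: prod_mset_torus_act cf'_def mult.assoc)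
  then show ?thesis
    unfolding is_form_def using cf(1,2) supp by (intro exI[of _ cf']) auto
qed

lemma is_form_monomial:
  assumes "size M = d" "set_mset M \<subseteq> rsubsets n r"
  shows "is_form n r d (\<lambda>p. \<Prod>I\<in>#M. p I)"
proof -
  define c where "c M' = (if M' = M then 1 else (0::complex))" for M'
  have supp: "{M'. c M' \<noteq> 0} = {M}" by (auto simp: c_def)
  have "(\<lambda>p. \<Prod>I\<in>#M. p I) = eval_form c"
    by (rule ext) (simp add: eval_form_def supp c_def)
  then show ?thesis
    unfolding is_form_def using assms supp by (intro exI[of _ c]) (auto simp: c_def)
qed

lemma is_form_lincomb:
  assumes "is_form n r d f" "is_form n r d g"
  shows "is_form n r d (\<lambda>p. a * f p + b * g p)"
proof -
  obtain cf where cf: "finite {M. cf M \<noteq> 0}"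
    "\<forall>M. cf M \<noteq> 0 \<longrightarrow> size M = d \<and> set_mset M \<subseteq> rsubsets n r" "f = eval_form cf"
    using assms(1) unfolding is_form_def by blast
  obtain cg where cg: "finite {M. cg M \<noteq> 0}"
    "\<forall>M. cg M \<noteq> 0 \<longrightarrow> size M = d \<and> set_mset M \<subseteq> rsubsets n r" "g = eval_form cg"
    using assms(2) unfolding is_form_def by blast
  define c where "c M = a * cf M + b * cg M" for M
  define U where "U = {M. cf M \<noteq> 0} \<union> {M. cg M \<noteq> 0}"
  have U: "finite U" "{M. c M \<noteq> 0} \<subseteq> U"
    using cf(1) cg(1) by (auto simp: U_def c_def)
  have sums: "eval_form h p = (\<Sum>M\<in>U. h M * (\<Prod>I\<in>#M. p I))"
    if "{M. h M \<noteq> 0} \<subseteq> U" for h p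
    by (rule eval_form_superset[OF U(1) that])
  have "(\<lambda>p. a * f p + b * g p) = eval_form c"
  proof
    fix p
    have "eval_form c p = (\<Sum>M\<in>U. c M * (\<Prod>I\<in>#M. p I))" using sums U(2) .
    also have "\<dots> = a * (\<Sum>M\<in>U. cf M * (\<Prod>I\<in>#M. p I)) + b * (\<Sum>M\<in>U. cg M * (\<Prod>I\<in>#M. p I))"
      by (simp add: c_def sum_distrib_left sum.distrib algebra_simps)
    also have "\<dots> = a * f p + b * g p" by (simp add: cf(3) cg(3) sums U_def)
    finally show "a * f p + b * g p = eval_form c p" by simp
  qed
  moreover have "\<forall>M. c M \<noteq> 0 \<longrightarrow> size M = d \<and> set_mset M \<subseteq> rsubsets n r"
    using cf(2) cg(2) unfolding c_def by (metis add_0 mult_zero_right)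
  moreover have "finite {M. c M \<noteq> 0}" using finite_subset[OF U(2) U(1)] .
  ultimately show ?thesis unfolding is_form_def by blast
qed

subsection \<open>Zariski closed sets and Schubert varieties\<close>

lemma zclosed_plvec: "zclosed n r (plvec n r)"
  unfolding zclosed_def by (rule exI[of _ "{}"]) auto

lemma zclosed_cone:
  assumes "zclosed n r Z" "y \<in> Z" "c \<noteq> 0"
  shows "(\<lambda>I. c * y I) \<in> Z"
proof -
  obtain F where F: "\<forall>f\<in>F. \<exists>d. is_form n r d f" "Z = {p \<in> plvec n r. \<forall>f\<in>F. f p = 0}"
    using assms(1) unfolding zclosed_def by blast
  show ?thesis using assms(2,3) F is_form_homogeneous plvec_cone by fastforce
qed

lemma zclosed_torus_preimage:
  assumes "zclosed n r Z" "t \<noteq> 0"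
  shows "zclosed n r {p \<in> plvec n r. torus_act s t p \<in> Z}"
proof -
  obtain F where F: "\<forall>f\<in>F. \<exists>d. is_form n r d f" "Z = {p \<in> plvec n r. \<forall>f\<in>F. f p = 0}"
    using assms(1) unfolding zclosed_def by blast
  let ?F = "(\<lambda>f p. f (torus_act s t p)) ` F"
  have "\<forall>f\<in>?F. \<exists>d. is_form n r d f"
    using F(1) is_form_torus_pullback[OF _ assms(2)] by blast
  moreover have "{p \<in> plvec n r. torus_act s t p \<in> Z} = {p \<in> plvec n r. \<forall>f\<in>?F. f p = 0}"
    using F(2) plvec_torus_act_iff[OF assms(2)] by auto
  ultimately show ?thesis unfolding zclosed_def by blast
qed

lemma minor_upper_triangular:
  assumes b: "\<forall>i j. j < i \<longrightarrow> b i j = 0" and J: "J \<in> rsubsets n r"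
  shows "minor (\<lambda>i k. b i (slist J ! k)) r J = (\<Prod>k<r. b (slist J ! k) (slist J ! k))"
proof -
  let ?L = "slist J"
  let ?g = "\<lambda>\<sigma>. of_int (sign \<sigma>) * (\<Prod>k<r. b (?L ! \<sigma> k) (?L ! k))"
  have "?g \<sigma> = 0" if \<sigma>: "\<sigma> permutes {0..<r}" "\<sigma> \<noteq> id" for \<sigma>
  proof -
    obtain k where k: "k < r" "k < \<sigma> k"
      using permutes_natset_le[OF \<sigma>(1)] \<sigma>(2) by force
    have "\<sigma> k < r" using permutes_in_image[OF \<sigma>(1)] k(1) by auto
    then have "?L ! k < ?L ! \<sigma> k"
      using sorted_wrt_nth_less[OF rsubsetsD(6)[OF J] k(2)] rsubsetsD(5)[OF J] by auto
    then have "b (?L ! \<sigma> k) (?L ! k) = 0" using b by blast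
    then show ?thesis using k(1) by simp blast
  qed
  then have "minor (\<lambda>i k. b i (?L ! k)) r J = sum ?g {id}"
    unfolding minor_def by (intro sum.mono_neutral_right) (auto simp: finite_permutations)
  then show ?thesis by simp
qed

lemma minor_row_scale:
  assumes I: "I \<in> rsubsets n r"
  shows "minor (\<lambda>i k. d i * A i k) r I = (\<Prod>i\<in>I. d i) * minor A r I"
proof -
  let ?L = "slist I"
  have "bij_betw ((!) ?L) {..<r} I"
    by (rule bij_betw_nth) (use rsubsetsD[OF I] in auto)
  then have prod_rows: "(\<Prod>k<r. d (?L ! k)) = (\<Prod>i\<in>I. d i)"
    by (rule prod.reindex_bij_betw)
  have "(\<Prod>k<r. d (?L ! \<sigma> k) * A (?L ! \<sigma> k) k) = (\<Prod>i\<in>I. d i) * (\<Prod>k<r. A (?L ! \<sigma> k) k)"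
    if "\<sigma> permutes {0..<r}" for \<sigma>
  proof -
    have "\<sigma> permutes {..<r}" using that by (simp add: atLeast0LessThan)
    then have "(\<Prod>k<r. d (?L ! \<sigma> k)) = (\<Prod>k<r. d (?L ! k))"
      using prod.permute[of \<sigma> "{..<r}" "\<lambda>k. d (?L ! k)"] by (simp add: comp_def)
    then show ?thesis using prod_rows by (simp add: prod.distrib)
  qed
  then show ?thesis
    unfolding minor_def sum_distrib_left by (intro sum.cong) (auto simp: algebra_simps)
qed

lemma prod_initial_rows_weight:
  assumes "I \<in> rsubsets n r"
  shows "(\<Prod>i\<in>I. if i \<le> s then t else 1) = t ^ weight s I"
proof -
  have "(\<Prod>i\<in>I. if i \<le> s then t else 1) = (\<Prod>i\<in>I \<inter> {i. i \<le> s}. t)"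
    using prod.If_cases[OF rsubsetsD(1)[OF assms], of "\<lambda>i. i \<le> s" "\<lambda>_. t" "\<lambda>_. 1"] by simp
  also have "I \<inter> {i. i \<le> s} = I \<inter> {1..s}" using rsubsetsD(2)[OF assms] by auto
  finally show ?thesis by (simp add: weight_def)
qed

text \<open>The cell is stable because the diagonal lift of \<open>\<lambda>\<^sub>s(t)\<close> lies in the Borel subgroup.\<close>

lemma schubert_cell_torus_act:
  assumes J: "J \<in> rsubsets n r" and p: "p \<in> schubert_cell n r J" and t: "t \<noteq> 0"
  shows "torus_act s t p \<in> schubert_cell n r J"
proof -
  obtain b where b: "b \<in> borel n" "p = plucker n r (\<lambda>i k. b i (slist J ! k))"
    using p unfolding schubert_cell_def by blast
  define d where "d i = (if i \<le> s then t else 1)" for i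
  define b' where "b' i j = d i * b i j" for i j
  have b': "b' \<in> borel n" using b(1) t unfolding borel_def b'_def d_def by auto
  have p': "plucker n r (\<lambda>i k. b' i (slist J ! k)) = torus_act s t p"
  proof
    fix I
    show "plucker n r (\<lambda>i k. b' i (slist J ! k)) I = torus_act s t p I"
    proof (cases "I \<in> rsubsets n r")
      case True
      have "minor (\<lambda>i k. b' i (slist J ! k)) r I
          = (\<Prod>i\<in>I. d i) * minor (\<lambda>i k. b i (slist J ! k)) r I"
        unfolding b'_def by (rule minor_row_scale[OF True])
      also have "(\<Prod>i\<in>I. d i) = t ^ weight s I"
        unfolding d_def by (rule prod_initial_rows_weight[OF True])
      finally show ?thesis using True by (simp add: plucker_def b(2) torus_act_weight)
    qed (simp add: plucker_def b(2) torus_act_weight)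
  qed
  show ?thesis unfolding schubert_cell_def using b' p'[symmetric] by blast
qed

lemma schubert_cell_subset_plvec:
  assumes J: "J \<in> rsubsets n r"
  shows "schubert_cell n r J \<subseteq> plvec n r"
proof
  fix p assume "p \<in> schubert_cell n r J"
  then obtain b where b: "b \<in> borel n" "p = plucker n r (\<lambda>i k. b i (slist J ! k))"
    unfolding schubert_cell_def by blast
  have "p J = (\<Prod>k<r. b (slist J ! k) (slist J ! k))"
    using b J minor_upper_triangular[of b J n r] unfolding borel_def plucker_def by auto
  moreover have "slist J ! k \<in> {1..n}" if "k < r" for k
    using nth_mem[of k "slist J"] rsubsetsD[OF J] that by auto
  then have "(\<Prod>k<r. b (slist J ! k) (slist J ! k)) \<noteq> 0"
    using b(1) unfolding borel_def by auto
  ultimately show "p \<in> plvec n r"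
    unfolding plvec_def using b(2) J by (auto simp: plucker_def intro!: exI[of _ J])
qed

lemma schubert_cell_subset_schubert: "schubert_cell n r J \<subseteq> schubert n r J"
  unfolding schubert_def zclosure_def by blast

lemma schubert_subset_plvec: "J \<in> rsubsets n r \<Longrightarrow> schubert n r J \<subseteq> plvec n r"
  unfolding schubert_def zclosure_def using zclosed_plvec schubert_cell_subset_plvec by blast

lemma schubert_cone: "y \<in> schubert n r J \<Longrightarrow> c \<noteq> 0 \<Longrightarrow> (\<lambda>I. c * y I) \<in> schubert n r J"
  unfolding schubert_def zclosure_def using zclosed_cone by blast

lemma schubert_torus_act:
  assumes J: "J \<in> rsubsets n r" and y: "y \<in> schubert n r J" and t: "t \<noteq> 0"
  shows "torus_act s t y \<in> schubert n r J"
  unfolding schubert_def zclosure_def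
proof (intro InterI, clarify)
  fix Z assume Z: "zclosed n r Z" "schubert_cell n r J \<subseteq> Z"
  let ?Z' = "{p \<in> plvec n r. torus_act s t p \<in> Z}"
  have "zclosed n r ?Z'" by (rule zclosed_torus_preimage[OF Z(1) t])
  moreover have "schubert_cell n r J \<subseteq> ?Z'"
    using schubert_cell_subset_plvec[OF J] schubert_cell_torus_act[OF J _ t] Z(2) by blast
  ultimately show "torus_act s t y \<in> Z"
    using y unfolding schubert_def zclosure_def by blast
qed

subsection \<open>Weights of semistable points\<close>

lemma homogeneous_identity_has_exponent:
  fixes a :: "'m \<Rightarrow> complex" and e :: "'m \<Rightarrow> nat"
  assumes "finite T"
    and "\<And>t. t \<noteq> 0 \<Longrightarrow> (\<Sum>M\<in>T. a M * t ^ e M) = t ^ N * (\<Sum>M\<in>T. a M)"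
    and "(\<Sum>M\<in>T. a M) \<noteq> 0"
  obtains M where "M \<in> T" "e M = N" "a M \<noteq> 0"
proof -
  define q where "q = (\<Sum>M\<in>T. monom (a M) (e M)) - monom (\<Sum>M\<in>T. a M) N"
  have "poly q t = 0" if "t \<noteq> 0" for t
    using assms(2)[OF that] by (simp add: q_def poly_sum poly_monom mult.commute)
  then have "UNIV - {0} \<subseteq> {t. poly q t = 0}" by auto
  moreover have "infinite (UNIV - {0::complex})"
    by (simp add: infinite_UNIV_char_0)
  ultimately have "q = 0" using poly_roots_finite finite_subset by blast
  then have "coeff q N = 0" by simp
  then have "(\<Sum>M\<in>T. if e M = N then a M else 0) \<noteq> 0"
    using assms(3) by (simp add: q_def coeff_sum)
  then obtain M where "M \<in> T" "(if e M = N then a M else 0) \<noteq> 0"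
    by (rule sum.not_neutral_contains_not_neutral)
  then show thesis by (intro that) (auto split: if_splits)
qed

lemma sum_mset_mean_straddles:
  fixes f :: "'a \<Rightarrow> nat"
  assumes mean: "(\<Sum>x\<in>#M. f x) = size M * c" and ne: "\<forall>x\<in>#M. f x \<noteq> c" and "M \<noteq> {#}"
  shows "\<exists>x\<in>#M. f x < c" "\<exists>x\<in>#M. c < f x"
proof -
  have "size M > 0" using \<open>M \<noteq> {#}\<close> by (simp add: nonempty_has_size)
  show "\<exists>x\<in>#M. f x < c"
  proof (rule ccontr)
    assume "\<not> ?thesis"
    then have "(\<Sum>x\<in>#M. c + 1) \<le> (\<Sum>x\<in>#M. f x)"
      using ne by (intro sum_mset_mono) (auto simp: not_less le_neq_implies_less Suc_le_eq)
    then show False using mean \<open>size M > 0\<close> by simp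
  qed
  show "\<exists>x\<in>#M. c < f x"
  proof (rule ccontr)
    assume "\<not> ?thesis"
    then have "(\<Sum>x\<in>#M. f x + 1) \<le> (\<Sum>x\<in>#M. c)"
      using ne by (intro sum_mset_mono) (auto simp: not_less le_neq_implies_less Suc_le_eq)
    moreover have "(\<Sum>x\<in>#M. f x + 1) = (\<Sum>x\<in>#M. f x) + size M" by (induction M) auto
    ultimately show False using mean \<open>size M > 0\<close> by simp
  qed
qed

lemma semistable_balanced_monomial:
  assumes "x \<in> semistable n r s X"
  obtains k M where "k \<ge> 1" "size M = n * k" "\<forall>I\<in>#M. x I \<noteq> 0"
    "(\<Sum>I\<in>#M. weight s I) = k * r * s"
proof -
  obtain k f where k: "k \<ge> 1" "x \<in> X" "f x \<noteq> 0" "is_form n r (n * k) f"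
    and inv: "\<And>t. t \<noteq> 0 \<Longrightarrow> f (torus_act s t x) = t ^ (k * r * s) * f x"
    using assms unfolding semistable_def invariant_on_def by blast
  obtain cf where cf: "finite {M. cf M \<noteq> 0}"
    "\<forall>M. cf M \<noteq> 0 \<longrightarrow> size M = n * k \<and> set_mset M \<subseteq> rsubsets n r" "f = eval_form cf"
    using k(4) unfolding is_form_def by blast
  define a where "a M = cf M * (\<Prod>I\<in>#M. x I)" for M
  define W where "W M = (\<Sum>I\<in>#M. weight s I)" for M
  have fx: "f x = (\<Sum>M | cf M \<noteq> 0. a M)" by (simp add: cf(3) eval_form_def a_def)
  have "(\<Sum>M | cf M \<noteq> 0. a M * t ^ W M) = t ^ (k * r * s) * (\<Sum>M | cf M \<noteq> 0. a M)"
    if "t \<noteq> 0" for t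
  proof -
    have "(\<Sum>M | cf M \<noteq> 0. a M * t ^ W M) = f (torus_act s t x)"
      unfolding cf(3) eval_form_def a_def W_def
      by (intro sum.cong) (simp_all add: prod_mset_torus_act mult_ac)
    also have "\<dots> = t ^ (k * r * s) * f x" by (rule inv[OF that])
    finally show ?thesis by (simp only: fx)
  qed
  moreover have "(\<Sum>M | cf M \<noteq> 0. a M) \<noteq> 0" using fx k(3) by simp
  ultimately obtain M where M: "M \<in> {M. cf M \<noteq> 0}" "W M = k * r * s" "a M \<noteq> 0"
    by (rule homogeneous_identity_has_exponent[OF cf(1)])
  have "\<forall>I\<in>#M. x I \<noteq> 0" using M(3) by (auto simp: a_def)
  moreover have "size M = n * k" using M(1) cf(2) by auto
  ultimately show thesis using that k(1) M(2) unfolding W_def by blast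
qed

lemma semistable_weights_straddle:
  assumes "x \<in> semistable n r s X" "\<not> n dvd r * s"
  obtains I I' where "x I \<noteq> 0" "n * weight s I < r * s" "x I' \<noteq> 0" "r * s < n * weight s I'"
proof -
  obtain k M where M: "k \<ge> 1" "size M = n * k" "\<forall>I\<in>#M. x I \<noteq> 0"
    "(\<Sum>I\<in>#M. weight s I) = k * r * s"
    by (rule semistable_balanced_monomial[OF assms(1)])
  have mean: "(\<Sum>I\<in>#M. n * weight s I) = size M * (r * s)"
    using M(2,4) by (simp add: sum_mset_distrib_left[symmetric])
  have ne: "\<forall>I\<in>#M. n * weight s I \<noteq> r * s" using assms(2) by (metis dvd_triv_left)
  have "M \<noteq> {#}"
  proof
    assume "M = {#}"
    then have "r * s = 0" using M(1,4) by simp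
    then show False using assms(2) by (metis dvd_0_right)
  qed
  obtain I where "I \<in># M" "n * weight s I < r * s"
    using sum_mset_mean_straddles(1)[OF mean ne \<open>M \<noteq> {#}\<close>] by blast
  moreover obtain I' where "I' \<in># M" "r * s < n * weight s I'"
    using sum_mset_mean_straddles(2)[OF mean ne \<open>M \<noteq> {#}\<close>] by blast
  ultimately show thesis using that M(3) by blast
qed

lemma semistable_distinct_weights:
  assumes "x \<in> semistable n r s X" "\<not> n dvd r * s"
  obtains I I' where "x I \<noteq> 0" "x I' \<noteq> 0" "weight s I < weight s I'"
proof -
  obtain I I' where I: "x I \<noteq> 0" "n * weight s I < r * s" "x I' \<noteq> 0" "r * s < n * weight s I'"
    by (rule semistable_weights_straddle[OF assms])
  then have "n * weight s I < n * weight s I'" by linarith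
  then show thesis using that I(1,3) by simp
qed

lemma finite_torus_stabilizer:
  assumes "x I \<noteq> 0" "x I' \<noteq> 0" "weight s I < weight s I'"
  shows "finite {t. t \<noteq> 0 \<and> (\<exists>c. torus_act s t x = (\<lambda>J. c * x J))}"
proof (rule finite_subset)
  let ?d = "weight s I' - weight s I"
  show "finite {z::complex. z ^ ?d = 1}" by (rule finite_roots_unity) (use assms(3) in simp)
  show "{t. t \<noteq> 0 \<and> (\<exists>c. torus_act s t x = (\<lambda>J. c * x J))} \<subseteq> {z. z ^ ?d = 1}"
  proof clarify
    fix t c assume t: "t \<noteq> 0" and e: "torus_act s t x = (\<lambda>J. c * x J)"
    have "t ^ weight s I = c" "t ^ weight s I' = c"
      using fun_cong[OF e, of I] fun_cong[OF e, of I'] assms(1,2) by (simp_all add: torus_act_weight)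
    moreover have "t ^ weight s I' = t ^ weight s I * t ^ ?d"
      using assms(3) by (simp flip: power_add)
    ultimately show "t ^ ?d = 1" using t by (metis mult_cancel_left1 power_not_zero)
  qed
qed

subsection \<open>Characters of the weight lattice\<close>

lemma complex_root_exists:
  assumes "m > 0"
  obtains t :: complex where "t ^ m = z"
proof
  let ?t = "rcis (root m (cmod z)) (Arg z / real m)"
  have "?t ^ m = rcis (root m (cmod z) ^ m) (real m * (Arg z / real m))" by (rule DeMoivre2)
  also have "\<dots> = rcis (cmod z) (Arg z)" using assms by simp
  also have "\<dots> = z" by (rule rcis_cmod_Arg)
  finally show "?t ^ m = z" .
qed

lemma bezout_Gcd_int:
  fixes e :: "'a \<Rightarrow> int"
  assumes "finite S"
  obtains \<beta> where "(\<Sum>I\<in>S. \<beta> I * e I) = Gcd (e ` S)"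
  using assms
proof (induction S arbitrary: thesis rule: finite_induct)
  case empty
  then show ?case by simp
next
  case (insert a F)
  obtain \<beta> where \<beta>: "(\<Sum>I\<in>F. \<beta> I * e I) = Gcd (e ` F)" using insert.IH by blast
  obtain u v where uv: "u * e a + v * Gcd (e ` F) = gcd (e a) (Gcd (e ` F))"
    using bezout_int by blast
  define \<beta>' where "\<beta>' I = (if I = a then u else v * \<beta> I)" for I
  have "(\<Sum>I\<in>F. \<beta>' I * e I) = v * (\<Sum>I\<in>F. \<beta> I * e I)"
    unfolding sum_distrib_left using insert.hyps(2) by (intro sum.cong) (auto simp: \<beta>'_def)
  then have "(\<Sum>I\<in>insert a F. \<beta>' I * e I) = gcd (e a) (Gcd (e ` F))"
    using insert.hyps \<beta> uv by (simp add: \<beta>'_def)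
  then show ?case using insert.prems by simp
qed

definition mset_of_mult :: "'a set \<Rightarrow> ('a \<Rightarrow> nat) \<Rightarrow> 'a multiset" where
  "mset_of_mult S m = (\<Sum>x\<in>S. replicate_mset (m x) x)"

lemma set_mset_of_mult: "finite S \<Longrightarrow> set_mset (mset_of_mult S m) \<subseteq> S"
  unfolding mset_of_mult_def by (induction S rule: finite_induct) auto

lemma sum_mset_of_mult:
  fixes f :: "'a \<Rightarrow> 'b::semiring_1"
  shows "finite S \<Longrightarrow> (\<Sum>x\<in>#mset_of_mult S m. f x) = (\<Sum>x\<in>S. of_nat (m x) * f x)"
  unfolding mset_of_mult_def by (induction S rule: finite_induct) auto

lemma prod_mset_of_mult:
  fixes f :: "'a \<Rightarrow> 'b::comm_monoid_mult"
  shows "finite S \<Longrightarrow> (\<Prod>x\<in>#mset_of_mult S m. f x) = (\<Prod>x\<in>S. f x ^ m x)"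
  unfolding mset_of_mult_def by (induction S rule: finite_induct) auto

lemma power_int_as_quotient:
  fixes z :: complex
  assumes "z \<noteq> 0"
  shows "z powi a = z ^ nat a / z ^ nat (- a)"
proof (cases "a \<ge> 0")
  case True
  then show ?thesis by (simp add: power_int_def)
next
  case False
  then show ?thesis by (simp add: power_int_def field_simps)
qed

lemma prod_power_int_distrib:
  fixes f :: "'a \<Rightarrow> 'b::field"
  shows "finite S \<Longrightarrow> (\<Prod>x\<in>S. f x) powi k = (\<Prod>x\<in>S. f x powi k)"
  by (induction S rule: finite_induct) (auto simp: power_int_mult_distrib)

context
  fixes S :: "'a set" and e :: "'a \<Rightarrow> int" and \<rho> :: "'a \<Rightarrow> complex"
  assumes weight_relations: "\<And>M1 M2. set_mset M1 \<subseteq> S \<Longrightarrow> set_mset M2 \<subseteq> S \<Longrightarrow>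
    (\<Sum>I\<in>#M1. e I) = (\<Sum>I\<in>#M2. e I) \<Longrightarrow> (\<Prod>I\<in>#M1. \<rho> I) = (\<Prod>I\<in>#M2. \<rho> I)"
begin

lemma weight_character_nonzero:
  assumes "I0 \<in> S" "\<rho> I0 \<noteq> 0" "0 < e I0" "I \<in> S"
  shows "\<rho> I \<noteq> 0"
proof
  assume \<rho>I: "\<rho> I = 0"
  let ?d = "nat (e I0)"
  let ?M1 = "replicate_mset ?d I + replicate_mset (nat (- e I)) I0"
  let ?M2 = "replicate_mset (nat (e I)) I0"
  have "(\<Sum>J\<in>#?M1. e J) = (\<Sum>J\<in>#?M2. e J)"
    using assms(3) by (cases "e I \<ge> 0") (auto simp: algebra_simps)
  then have "(\<Prod>J\<in>#?M1. \<rho> J) = (\<Prod>J\<in>#?M2. \<rho> J)"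
    by (intro weight_relations) (use assms in auto)
  then show False using \<rho>I assms(2,3) by (simp add: power_0_left)
qed

lemma weight_character_powi:
  assumes "finite S" and nz: "\<And>I. I \<in> S \<Longrightarrow> \<rho> I \<noteq> 0"
    and "(\<Sum>I\<in>S. a I * e I) = (\<Sum>I\<in>S. b I * e I)"
  shows "(\<Prod>I\<in>S. \<rho> I powi a I) = (\<Prod>I\<in>S. \<rho> I powi b I)"
proof -
  define pos where "pos f = mset_of_mult S (\<lambda>I. nat (f I))" for f :: "'a \<Rightarrow> int"
  define neg where "neg f = mset_of_mult S (\<lambda>I. nat (- f I))" for f :: "'a \<Rightarrow> int"
  have split: "(\<Sum>I\<in>#pos f. e I) = (\<Sum>I\<in>S. f I * e I) + (\<Sum>I\<in>#neg f. e I)" for f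
    unfolding pos_def neg_def sum_mset_of_mult[OF \<open>finite S\<close>] sum.distrib[symmetric]
    by (rule sum.cong) (auto simp: algebra_simps)
  have "(\<Sum>I\<in>#pos a + neg b. e I) = (\<Sum>I\<in>#pos b + neg a. e I)"
    using split[of a] split[of b] assms(3) by simp
  then have "(\<Prod>I\<in>#pos a + neg b. \<rho> I) = (\<Prod>I\<in>#pos b + neg a. \<rho> I)"
    by (intro weight_relations) (use set_mset_of_mult[OF \<open>finite S\<close>] in \<open>auto simp: pos_def neg_def\<close>)
  then have eq: "(\<Prod>I\<in>#pos a. \<rho> I) * (\<Prod>I\<in>#neg b. \<rho> I) = (\<Prod>I\<in>#pos b. \<rho> I) * (\<Prod>I\<in>#neg a. \<rho> I)"
    by (simp add: mult.commute)
  have quotient: "(\<Prod>I\<in>S. \<rho> I powi f I) = (\<Prod>I\<in>#pos f. \<rho> I) / (\<Prod>I\<in>#neg f. \<rho> I)" for f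
    unfolding pos_def neg_def prod_mset_of_mult[OF \<open>finite S\<close>] prod_dividef[symmetric]
    by (rule prod.cong) (use nz power_int_as_quotient in auto)
  have neg_nonzero: "(\<Prod>I\<in>#neg f. \<rho> I) \<noteq> 0" for f
    using nz set_mset_of_mult[OF \<open>finite S\<close>, of "\<lambda>I. nat (- f I)"]
    by (fastforce simp: neg_def)
  show ?thesis
    unfolding quotient frac_eq_eq[OF neg_nonzero neg_nonzero] by (rule eq)
qed

text \<open>A character of \<open>\<int>\<^sup>S\<close> that is trivial on the kernel of \<open>e\<close> factors through the image
  \<open>g\<int>\<close> of \<open>e\<close>; its value at a Bezout combination for \<open>g\<close> has a \<open>g\<close>-th root \<open>t\<close>.\<close>

lemma weight_character_is_power:
  assumes "finite S" "I0 \<in> S" "\<rho> I0 \<noteq> 0" "0 < e I0"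
  obtains t where "t \<noteq> 0" "\<And>I. I \<in> S \<Longrightarrow> \<rho> I = t powi e I"
proof -
  have nz: "\<rho> I \<noteq> 0" if "I \<in> S" for I
    using weight_character_nonzero[OF assms(2-4) that] .
  define g where "g = Gcd (e ` S)"
  obtain \<beta> where \<beta>: "(\<Sum>I\<in>S. \<beta> I * e I) = g"
    using bezout_Gcd_int[OF assms(1)] unfolding g_def by blast
  have "g \<noteq> 0" using assms(2,4) by (auto simp: g_def)
  then have "g > 0" unfolding g_def by (simp add: order_le_neq_trans)
  define t0 where "t0 = (\<Prod>I\<in>S. \<rho> I powi \<beta> I)"
  obtain t where t: "t ^ nat g = t0"
    using complex_root_exists[of "nat g" t0] \<open>g > 0\<close> by auto
  have "t0 \<noteq> 0" using nz assms(1) by (simp add: t0_def)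
  then have "t \<noteq> 0" using t \<open>g > 0\<close> by auto
  moreover have "\<rho> J = t powi e J" if J: "J \<in> S" for J
  proof -
    have "g dvd e J" using J by (simp add: g_def Gcd_dvd)
    then obtain k where k: "e J = g * k" by (elim dvdE)
    have "(\<Sum>I\<in>S. (\<beta> I * k) * e I) = k * (\<Sum>I\<in>S. \<beta> I * e I)"
      by (simp add: sum_distrib_left mult_ac)
    also have "\<dots> = (\<Sum>I\<in>S. if I = J then e I else 0)" using \<beta> k J assms(1) by simp
    also have "\<dots> = (\<Sum>I\<in>S. (if I = J then 1 else 0) * e I)" by (intro sum.cong) auto
    finally have "(\<Sum>I\<in>S. (\<beta> I * k) * e I) = (\<Sum>I\<in>S. (if I = J then 1 else 0) * e I)" .
    then have "(\<Prod>I\<in>S. \<rho> I powi (\<beta> I * k)) = (\<Prod>I\<in>S. \<rho> I powi (if I = J then 1 else 0))"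
      using weight_character_powi[OF assms(1) nz, of "\<lambda>I. \<beta> I * k" "\<lambda>I. if I = J then 1 else 0"]
      by simp
    also have "\<dots> = \<rho> J" using J assms(1) by (simp add: if_distrib cong: if_cong)
    finally have "\<rho> J = t0 powi k"
      by (simp add: t0_def power_int_mult prod_power_int_distrib[symmetric] assms(1))
    also have "\<dots> = t powi e J"
      unfolding k t[symmetric] power_int_power using \<open>g > 0\<close> by (simp add: power_int_mult)
    finally show ?thesis .
  qed
  ultimately show thesis using that by blast
qed

end

text \<open>Dividing by \<open>\<rho> I3\<close> and shifting the weights by \<open>w I3\<close> turns relations that
  preserve size and weight into relations that preserve the shifted weight.\<close>

lemma size_weight_character:
  fixes \<rho> :: "'a \<Rightarrow> complex" and w :: "'a \<Rightarrow> nat"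
  assumes "finite S"
    and relations: "\<And>M1 M2. set_mset M1 \<subseteq> S \<Longrightarrow> set_mset M2 \<subseteq> S \<Longrightarrow> size M1 = size M2 \<Longrightarrow>
      (\<Sum>I\<in>#M1. w I) = (\<Sum>I\<in>#M2. w I) \<Longrightarrow> (\<Prod>I\<in>#M1. \<rho> I) = (\<Prod>I\<in>#M2. \<rho> I)"
    and I3: "I3 \<in> S" "\<rho> I3 \<noteq> 0" and I4: "I4 \<in> S" "\<rho> I4 \<noteq> 0" and "w I3 < w I4"
  obtains c t where "c \<noteq> 0" "t \<noteq> 0" "\<forall>I\<in>S. \<rho> I = c * t ^ w I"
proof -
  define e where "e I = int (w I) - int (w I3)" for I
  define \<rho>' where "\<rho>' I = \<rho> I / \<rho> I3" for I
  have shifted: "(\<Prod>I\<in>#M1. \<rho>' I) = (\<Prod>I\<in>#M2. \<rho>' I)"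
    if M: "set_mset M1 \<subseteq> S" "set_mset M2 \<subseteq> S" "(\<Sum>I\<in>#M1. e I) = (\<Sum>I\<in>#M2. e I)" for M1 M2
  proof -
    let ?M1 = "M1 + replicate_mset (size M2) I3" and ?M2 = "M2 + replicate_mset (size M1) I3"
    have sum_e: "int (\<Sum>I\<in>#M. w I) = (\<Sum>I\<in>#M. e I) + int (size M) * int (w I3)" for M
      by (induction M) (auto simp: e_def algebra_simps)
    have "int ((\<Sum>I\<in>#M1. w I) + size M2 * w I3) = int ((\<Sum>I\<in>#M2. w I) + size M1 * w I3)"
      using M(3) sum_e[of M1] sum_e[of M2] by (simp only: of_nat_add of_nat_mult)
    then have "(\<Sum>I\<in>#M1. w I) + size M2 * w I3 = (\<Sum>I\<in>#M2. w I) + size M1 * w I3"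
      by (simp only: of_nat_eq_iff)
    then have "(\<Prod>I\<in>#?M1. \<rho> I) = (\<Prod>I\<in>#?M2. \<rho> I)"
      by (intro relations) (use M I3 in auto)
    then have eq: "(\<Prod>I\<in>#M1. \<rho> I) * \<rho> I3 ^ size M2 = (\<Prod>I\<in>#M2. \<rho> I) * \<rho> I3 ^ size M1"
      by simp
    have "(\<Prod>I\<in>#M. \<rho>' I) = (\<Prod>I\<in>#M. \<rho> I) / \<rho> I3 ^ size M" for M
      by (induction M) (auto simp: \<rho>'_def)
    then show ?thesis using eq I3(2) by (simp add: frac_eq_eq)
  qed
  have "\<rho>' I4 \<noteq> 0" "0 < e I4" using I3(2) I4(2) \<open>w I3 < w I4\<close> by (auto simp: \<rho>'_def e_def)
  then obtain t where t: "t \<noteq> 0" "\<And>I. I \<in> S \<Longrightarrow> \<rho>' I = t powi e I"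
    using weight_character_is_power[of S e \<rho>', OF shifted \<open>finite S\<close> I4(1)] by blast
  define c where "c = \<rho> I3 * t powi (- int (w I3))"
  have "\<rho> I = c * t ^ w I" if "I \<in> S" for I
  proof -
    have "e I = - int (w I3) + int (w I)" by (simp add: e_def)
    then have "t powi e I = t powi (- int (w I3)) * t ^ w I"
      using t(1) power_int_add[of t "- int (w I3)" "int (w I)"] by simp
    moreover have "\<rho> I = \<rho> I3 * t powi e I" using t(2)[OF that] I3(2) by (simp add: \<rho>'_def field_simps)
    ultimately show ?thesis by (simp add: c_def mult.assoc)
  qed
  moreover have "c \<noteq> 0" using I3(2) t(1) by (simp add: c_def)
  ultimately show thesis using that t(1) by blast
qed

subsection \<open>Closed orbits\<close>

text \<open>Balanced pairs give the binomial relations of \<open>x\<close> that are preserved by scaling and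
  by \<open>\<lambda>\<^sub>s\<close>; together with the coordinates vanishing at \<open>x\<close> they cut out a closed set containing
  the orbit of \<open>x\<close>.\<close>

definition balanced_pair :: "nat \<Rightarrow> (nat set \<Rightarrow> complex) \<Rightarrow> nat set multiset \<Rightarrow> nat set multiset \<Rightarrow> bool"
  where "balanced_pair s x M1 M2 \<longleftrightarrow> (\<forall>I\<in>#M1 + M2. x I \<noteq> 0) \<and> size M1 = size M2 \<and>
    (\<Sum>I\<in>#M1. weight s I) = (\<Sum>I\<in>#M2. weight s I)"

definition orbit_equations ::
    "nat \<Rightarrow> nat \<Rightarrow> nat \<Rightarrow> (nat set \<Rightarrow> complex) \<Rightarrow> ((nat set \<Rightarrow> complex) \<Rightarrow> complex) set" where
  "orbit_equations n r s x = {(\<lambda>p. p I) | I. I \<in> rsubsets n r \<and> x I = 0} \<union>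
     {(\<lambda>p. (\<Prod>I\<in>#M2. x I) * (\<Prod>I\<in>#M1. p I) - (\<Prod>I\<in>#M1. x I) * (\<Prod>I\<in>#M2. p I)) | M1 M2.
        balanced_pair s x M1 M2}"

definition orbit_variety :: "nat \<Rightarrow> nat \<Rightarrow> nat \<Rightarrow> (nat set \<Rightarrow> complex) \<Rightarrow> (nat set \<Rightarrow> complex) set"
  where "orbit_variety n r s x = {p \<in> plvec n r. \<forall>f\<in>orbit_equations n r s x. f p = 0}"

lemma zclosed_orbit_variety:
  assumes x: "x \<in> plvec n r"
  shows "zclosed n r (orbit_variety n r s x)"
proof -
  have "is_form n r (size M1) f"
    if "f = (\<lambda>p. (\<Prod>I\<in>#M2. x I) * (\<Prod>I\<in>#M1. p I) - (\<Prod>I\<in>#M1. x I) * (\<Prod>I\<in>#M2. p I))"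
      and "balanced_pair s x M1 M2" for f M1 M2
  proof -
    have "set_mset M1 \<subseteq> rsubsets n r" "set_mset M2 \<subseteq> rsubsets n r"
      using that(2) plvec_support[OF x] by (auto simp: balanced_pair_def)
    then have "is_form n r (size M1) (\<lambda>p. (\<Prod>I\<in>#M2. x I) * (\<Prod>I\<in>#M1. p I)
        + - (\<Prod>I\<in>#M1. x I) * (\<Prod>I\<in>#M2. p I))"
      using that(2) by (intro is_form_lincomb is_form_monomial) (auto simp: balanced_pair_def)
    then show ?thesis using that(1) by simp
  qed
  moreover have "is_form n r 1 (\<lambda>p. p I)" if "I \<in> rsubsets n r" for I
    using is_form_monomial[of "{#I#}" 1] that by simp
  ultimately have "\<forall>f\<in>orbit_equations n r s x. \<exists>d. is_form n r d f"
    unfolding orbit_equations_def by blast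
  then show ?thesis unfolding zclosed_def orbit_variety_def by blast
qed

lemma torus_orbit_subset_orbit_variety:
  assumes x: "x \<in> plvec n r"
  shows "torus_orbit s x \<subseteq> orbit_variety n r s x"
proof
  fix y assume "y \<in> torus_orbit s x"
  then obtain c t where ct: "c \<noteq> 0" "t \<noteq> 0" and y: "y = (\<lambda>I. c * torus_act s t x I)"
    unfolding torus_orbit_def by blast
  have "y \<in> plvec n r" using plvec_cone[OF _ ct(1)] plvec_torus_act_iff[OF ct(2)] x y by blast
  moreover have "(\<Prod>I\<in>#M. y I) = c ^ size M * t ^ (\<Sum>I\<in>#M. weight s I) * (\<Prod>I\<in>#M. x I)" for M
    unfolding y by (simp add: prod_mset_scale prod_mset_torus_act)
  then have "f y = 0" if "f \<in> orbit_equations n r s x" for f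
    using that unfolding orbit_equations_def balanced_pair_def by (auto simp: y torus_act_weight)
  ultimately show "y \<in> orbit_variety n r s x" unfolding orbit_variety_def by blast
qed

lemma orbit_variety_support:
  assumes y: "y \<in> orbit_variety n r s x" and "x I = 0"
  shows "y I = 0"
proof (cases "I \<in> rsubsets n r")
  case True
  then have mem: "(\<lambda>p. p I) \<in> orbit_equations n r s x"
    using assms(2) unfolding orbit_equations_def by blast
  have "\<forall>f\<in>orbit_equations n r s x. f y = 0" using y unfolding orbit_variety_def by simp
  from bspec[OF this mem] show ?thesis by simp
next
  case False
  then show ?thesis using y unfolding orbit_variety_def plvec_def by simp
qed

lemma orbit_variety_binomial:
  assumes y: "y \<in> orbit_variety n r s x" and "balanced_pair s x M1 M2"
  shows "(\<Prod>I\<in>#M2. x I) * (\<Prod>I\<in>#M1. y I) = (\<Prod>I\<in>#M1. x I) * (\<Prod>I\<in>#M2. y I)"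
proof -
  have mem: "(\<lambda>p. (\<Prod>I\<in>#M2. x I) * (\<Prod>I\<in>#M1. p I) - (\<Prod>I\<in>#M1. x I) * (\<Prod>I\<in>#M2. p I))
      \<in> orbit_equations n r s x"
    using assms(2) unfolding orbit_equations_def by blast
  have "\<forall>f\<in>orbit_equations n r s x. f y = 0" using y unfolding orbit_variety_def by simp
  from bspec[OF this mem] show ?thesis by simp
qed

lemma orbit_variety_subset_torus_orbit:
  assumes x: "x \<in> plvec n r" and y: "y \<in> orbit_variety n r s x"
    and I3: "y I3 \<noteq> 0" and I4: "y I4 \<noteq> 0" and "weight s I3 < weight s I4"
  shows "y \<in> torus_orbit s x"
proof -
  define S where "S = {I. x I \<noteq> 0}"
  have "finite S" using plvec_support[OF x] finite_rsubsets finite_subset unfolding S_def by blast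
  have y_support: "y I = 0" if "I \<notin> S" for I
    using that by (intro orbit_variety_support[OF y]) (simp add: S_def)
  define \<rho> where "\<rho> I = y I / x I" for I
  have y_\<rho>: "y I = \<rho> I * x I" for I using y_support[of I] by (auto simp: \<rho>_def S_def)
  have relations: "(\<Prod>I\<in>#M1. \<rho> I) = (\<Prod>I\<in>#M2. \<rho> I)"
    if "set_mset M1 \<subseteq> S" "set_mset M2 \<subseteq> S" "size M1 = size M2"
      "(\<Sum>I\<in>#M1. weight s I) = (\<Sum>I\<in>#M2. weight s I)" for M1 M2
  proof -
    have "balanced_pair s x M1 M2" using that by (auto simp: balanced_pair_def S_def)
    then have "(\<Prod>I\<in>#M2. x I) * (\<Prod>I\<in>#M1. y I) = (\<Prod>I\<in>#M1. x I) * (\<Prod>I\<in>#M2. y I)"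
      by (rule orbit_variety_binomial[OF y])
    moreover have "(\<Prod>I\<in>#M. x I) \<noteq> 0" if "set_mset M \<subseteq> S" for M
      using that by (auto simp: S_def)
    ultimately show ?thesis using that(1,2) by (simp add: y_\<rho> prod_mset.distrib)
  qed
  have S34: "I3 \<in> S" "\<rho> I3 \<noteq> 0" "I4 \<in> S" "\<rho> I4 \<noteq> 0"
    using I3 I4 y_support y_\<rho> by auto
  obtain c t where ct: "c \<noteq> 0" "t \<noteq> 0" "\<forall>I\<in>S. \<rho> I = c * t ^ weight s I"
    by (rule size_weight_character[where \<rho> = \<rho> and w = "weight s",
          OF \<open>finite S\<close> relations S34 \<open>weight s I3 < weight s I4\<close>])
  have "y = (\<lambda>I. c * torus_act s t x I)"
  proof
    fix I
    show "y I = c * torus_act s t x I"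
      using ct(3) y_\<rho>[of I] y_support[of I] by (cases "I \<in> S") (auto simp: torus_act_weight S_def)
  qed
  then show ?thesis unfolding torus_orbit_def using ct(1,2) by blast
qed

lemma torus_orbit_subset_semistable:
  assumes J: "J \<in> rsubsets n r" and x: "x \<in> semistable n r s (schubert n r J)"
  shows "torus_orbit s x \<subseteq> semistable n r s (schubert n r J)"
proof
  fix y assume "y \<in> torus_orbit s x"
  then obtain c t where ct: "c \<noteq> 0" "t \<noteq> 0" and y: "y = (\<lambda>I. c * torus_act s t x I)"
    unfolding torus_orbit_def by blast
  obtain k f where k: "k \<ge> 1" "x \<in> schubert n r J" "f x \<noteq> 0" "is_form n r (n * k) f"
    and inv: "invariant_on r s (schubert n r J) k f"
    using x unfolding semistable_def by blast
  have "y \<in> schubert n r J" using schubert_cone[OF schubert_torus_act[OF J k(2) ct(2)] ct(1)] y by simp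
  moreover have "f y = c ^ (n * k) * (t ^ (k * r * s) * f x)"
    using is_form_homogeneous[OF k(4)] inv ct(2) k(2) y unfolding invariant_on_def by simp
  then have "f y \<noteq> 0" using ct k(3) by simp
  ultimately show "y \<in> semistable n r s (schubert n r J)"
    unfolding semistable_def using k(1,4) inv by blast
qed

lemma semistable_eq_stable_if_not_dvd:
  assumes J: "J \<in> rsubsets n r" and "\<not> n dvd r * s"
  shows "semistable n r s (schubert n r J) = stable n r s (schubert n r J)"
proof
  show "stable n r s (schubert n r J) \<subseteq> semistable n r s (schubert n r J)"
    unfolding stable_def by blast
  show "semistable n r s (schubert n r J) \<subseteq> stable n r s (schubert n r J)"
  proof
    fix x assume x: "x \<in> semistable n r s (schubert n r J)"
    let ?SS = "semistable n r s (schubert n r J)"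
    have "x \<in> plvec n r" using x schubert_subset_plvec[OF J] unfolding semistable_def by blast
    have "torus_orbit s x = orbit_variety n r s x \<inter> ?SS"
    proof
      show "torus_orbit s x \<subseteq> orbit_variety n r s x \<inter> ?SS"
        using torus_orbit_subset_orbit_variety[OF \<open>x \<in> plvec n r\<close>]
          torus_orbit_subset_semistable[OF J x] by blast
    next
      show "orbit_variety n r s x \<inter> ?SS \<subseteq> torus_orbit s x"
      proof clarify
        fix y assume "y \<in> orbit_variety n r s x" "y \<in> ?SS"
        moreover obtain I3 I4 where "y I3 \<noteq> 0" "y I4 \<noteq> 0" "weight s I3 < weight s I4"
          using semistable_distinct_weights[OF \<open>y \<in> ?SS\<close> assms(2)] by blast
        ultimately show "y \<in> torus_orbit s x"
          using orbit_variety_subset_torus_orbit[OF \<open>x \<in> plvec n r\<close>] by blast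
      qed
    qed
    moreover obtain I3 I4 where "x I3 \<noteq> 0" "x I4 \<noteq> 0" "weight s I3 < weight s I4"
      using semistable_distinct_weights[OF x assms(2)] by blast
    then have "finite {t. t \<noteq> 0 \<and> (\<exists>c. torus_act s t x = (\<lambda>I. c * x I))}"
      by (rule finite_torus_stabilizer)
    ultimately show "x \<in> stable n r s (schubert n r J)"
      unfolding stable_def using x zclosed_orbit_variety[OF \<open>x \<in> plvec n r\<close>] by blast
  qed
qed

subsection \<open>The divisible case\<close>

lemma sorted_list_of_set_nth_le_iff:
  fixes A :: "nat set"
  assumes A: "finite A" and k: "k < card A"
  shows "slist A ! k \<le> s \<longleftrightarrow> k < card {x\<in>A. x \<le> s}"
proof -
  let ?L = "slist A"
  have L: "set ?L = A" "length ?L = card A" "sorted_wrt (<) ?L" "distinct ?L"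
    using A by simp_all
  have le_kth: "?L ! i \<le> ?L ! k \<longleftrightarrow> i \<le> k" if "i < card A" for i
    using sorted_wrt_nth_less[OF L(3), of i k] sorted_wrt_nth_less[OF L(3), of k i] that k L(2)
    by (cases i k rule: linorder_cases) auto
  have "{x\<in>A. x \<le> ?L ! k} = (!) ?L ` {..k}"
  proof (intro equalityI subsetI)
    fix x assume x: "x \<in> {x\<in>A. x \<le> ?L ! k}"
    then have "x \<in> set ?L" using L(1) by simp
    then obtain i where i: "i < card A" "x = ?L ! i" using L(2) by (auto simp: in_set_conv_nth)
    then show "x \<in> (!) ?L ` {..k}" using x le_kth[OF i(1)] by auto
  next
    fix x assume "x \<in> (!) ?L ` {..k}"
    then obtain i where i: "i \<le> k" "x = ?L ! i" by auto
    then have "i < card A" using k by simp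
    then have "?L ! i \<in> A" using L(1,2) nth_mem by metis
    then show "x \<in> {x\<in>A. x \<le> ?L ! k}" using i le_kth[OF \<open>i < card A\<close>] by simp
  qed
  moreover have "inj_on ((!) ?L) {..k}"
    using k L(2,4) by (intro inj_on_nth) auto
  ultimately have below_kth: "card {x\<in>A. x \<le> ?L ! k} = Suc k"
    by (simp add: card_image)
  have "?L ! k \<in> A" using L(1,2) k nth_mem by metis
  show ?thesis
  proof
    assume "?L ! k \<le> s"
    then have "card {x\<in>A. x \<le> ?L ! k} \<le> card {x\<in>A. x \<le> s}"
      using A by (intro card_mono) auto
    then show "k < card {x\<in>A. x \<le> s}" using below_kth by simp
  next
    assume "k < card {x\<in>A. x \<le> s}"
    show "?L ! k \<le> s"
    proof (rule ccontr)
      assume "\<not> ?L ! k \<le> s"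
      then have "{x\<in>A. x \<le> s} \<subseteq> {x\<in>A. x \<le> ?L ! k} - {?L ! k}" by auto
      then have "card {x\<in>A. x \<le> s} \<le> card ({x\<in>A. x \<le> ?L ! k} - {?L ! k})"
        using A by (intro card_mono) auto
      also have "\<dots> = k" using below_kth \<open>?L ! k \<in> A\<close> by simp
      finally show False using \<open>k < card {x\<in>A. x \<le> s}\<close> by simp
    qed
  qed
qed

lemma slist_nth_le_iff_weight:
  assumes "I \<in> rsubsets n r" "k < r"
  shows "slist I ! k \<le> s \<longleftrightarrow> k < weight s I"
proof -
  have "{x\<in>I. x \<le> s} = I \<inter> {1..s}" using rsubsetsD(2)[OF assms(1)] by auto
  then show ?thesis
    using sorted_list_of_set_nth_le_iff[of I k s] rsubsetsD(1,3)[OF assms(1)] assms(2)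
    by (simp add: weight_def)
qed

lemma pairing_nonpos_iff:
  assumes "n > 0"
  shows "pairing n r s J \<le> 0 \<longleftrightarrow> n * weight s J \<le> r * s"
proof -
  have "pairing n r s J \<le> 0 \<longleftrightarrow> real (weight s J) * real n \<le> real r * real s"
    using assms by (simp add: pairing_def weight_def pos_le_divide_eq)
  also have "\<dots> \<longleftrightarrow> real (n * weight s J) \<le> real (r * s)" by (simp add: mult.commute)
  also have "\<dots> \<longleftrightarrow> n * weight s J \<le> r * s" by (rule of_nat_le_iff)
  finally show ?thesis .
qed

lemma rsubset_of_weight:
  assumes "a \<le> s" "a \<le> r" "s \<le> n" "r - a \<le> n - s"
  defines "I \<equiv> {1..a} \<union> {s+1..s+(r-a)}"
  shows "I \<in> rsubsets n r" "weight s I = a"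
proof -
  have "{1..a} \<inter> {s+1..s+(r-a)} = {}" using assms(1) by auto
  then have "card I = r" unfolding I_def using assms(2) by (simp add: card_Un_disjoint)
  moreover have "I \<subseteq> {1..n}" unfolding I_def using assms by auto
  ultimately show "I \<in> rsubsets n r" unfolding rsubsets_def by simp
  have "I \<inter> {1..s} = {1..a}" unfolding I_def using assms(1) by auto
  then show "weight s I = a" by (simp add: weight_def)
qed

text \<open>If \<open>a = weight s J\<close> had \<open>n a < r s\<close>, then \<open>J' = {1..a+1} \<union> {s+1..}\<close> would still have
  non-positive pairing, but the \<open>(a+1)\<close>-st element of \<open>J'\<close> lies in \<open>{1..s}\<close> and that of \<open>J\<close>
  does not, so \<open>J\<close> would not be Bruhat-below \<open>J'\<close>.\<close>

lemma minimal_weight_if_dvd: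
  assumes "r < n" "s < n" and J: "J \<in> rsubsets n r" and "pairing n r s J \<le> 0"
    and minimal: "\<forall>J'\<in>rsubsets n r. pairing n r s J' \<le> 0 \<longrightarrow> bruhat_le r J J'"
    and "n dvd r * s"
  shows "n * weight s J = r * s"
proof (rule ccontr)
  assume ne: "n * weight s J \<noteq> r * s"
  define a where "a = weight s J"
  obtain m where m: "r * s = n * m" using \<open>n dvd r * s\<close> by blast
  have "n > 0" using assms(1) by simp
  have "n * a \<le> n * m" using \<open>n > 0\<close> assms(4) m by (simp add: pairing_nonpos_iff a_def)
  then have "a < m" using ne m by (simp add: a_def)
  then have "r * s > 0" using m \<open>n > 0\<close> by simp
  then have "0 < r" "0 < s" by auto
  have "r * s < n * s" "r * s < r * n"
    using mult_less_mono1[OF assms(1) \<open>0 < s\<close>] mult_less_mono2[OF assms(2) \<open>0 < r\<close>] by auto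
  then have "m < s" "m < r" using m by (simp_all add: mult.commute)
  moreover have "r - a \<le> n - s"
  proof -
    have "card (J - {1..s}) = r - a"
      using rsubsetsD(1,3)[OF J] by (simp add: card_Diff_subset_Int a_def weight_def)
    moreover have "J - {1..s} \<subseteq> {s+1..n}" using rsubsetsD(2)[OF J] by auto
    ultimately show ?thesis using card_mono[OF finite_atLeastAtMost, of "J - {1..s}" "s+1" n] by simp
  qed
  ultimately have "a + 1 \<le> s" "a + 1 \<le> r" "s \<le> n" "r - (a + 1) \<le> n - s"
    using \<open>a < m\<close> assms(2) by auto
  then obtain J' where J': "J' \<in> rsubsets n r" "weight s J' = a + 1"
    using rsubset_of_weight by blast
  have "n * (a + 1) \<le> n * m" using \<open>a < m\<close> by (intro mult_le_mono2) simp
  then have "n * (a + 1) \<le> r * s" using m by simp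
  then have "bruhat_le r J J'" using minimal J' \<open>n > 0\<close> by (simp add: pairing_nonpos_iff)
  then have "slist J ! a \<le> slist J' ! a" using \<open>a < m\<close> \<open>m < r\<close> by (simp add: bruhat_le_def)
  moreover have "slist J' ! a \<le> s" "\<not> slist J ! a \<le> s"
    using slist_nth_le_iff_weight[OF J'(1)] slist_nth_le_iff_weight[OF J] \<open>a < m\<close> \<open>m < r\<close> J'(2)
    by (simp_all add: a_def)
  ultimately show False by simp
qed

lemma minor_coordinate_columns:
  assumes J: "J \<in> rsubsets n r" and I: "I \<in> rsubsets n r"
  shows "minor (\<lambda>i k. if i = slist J ! k then 1 else 0) r I = (if I = J then 1 else 0)"
proof (cases "I = J")
  case True
  then show ?thesis using minor_upper_triangular[of "\<lambda>i j. if i = j then 1 else 0" J n r] J by simp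
next
  case False
  have "(\<Prod>k<r. if slist I ! \<sigma> k = slist J ! k then 1 else 0 :: complex) = 0"
    if \<sigma>: "\<sigma> permutes {0..<r}" for \<sigma>
  proof -
    have "\<exists>k<r. slist I ! \<sigma> k \<noteq> slist J ! k"
    proof (rule ccontr)
      assume "\<not> ?thesis"
      then have "(\<lambda>k. slist J ! k) ` {0..<r} = (\<lambda>k. slist I ! k) ` (\<sigma> ` {0..<r})"
        by (auto simp: image_image)
      then have "J = I"
        using permutes_image[OF \<sigma>] nth_image[of r "slist J"] nth_image[of r "slist I"]
          rsubsetsD(4,5)[OF J] rsubsetsD(4,5)[OF I] by simp
      then show False using False by simp
    qed
    then show ?thesis by auto
  qed
  then show ?thesis unfolding minor_def using False by (auto intro: sum.neutral)
qed

lemma coordinate_point_in_schubert: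
  assumes J: "J \<in> rsubsets n r"
  shows "(\<lambda>I. if I = J then 1 else 0) \<in> schubert n r J"
proof -
  define b where "b i j = (if i = j then 1 else 0 :: complex)" for i j :: nat
  have "b \<in> borel n" by (simp add: borel_def b_def)
  have point: "plucker n r (\<lambda>i k. b i (slist J ! k)) = (\<lambda>I. if I = J then 1 else 0)"
  proof
    fix I
    show "plucker n r (\<lambda>i k. b i (slist J ! k)) I = (if I = J then 1 else 0)"
    proof (cases "I \<in> rsubsets n r")
      case True
      then show ?thesis using minor_coordinate_columns[OF J True] by (simp add: plucker_def b_def)
    next
      case False
      then show ?thesis using J by (auto simp: plucker_def)
    qed
  qed
  then have "(\<lambda>I. if I = J then 1 else 0) \<in> schubert_cell n r J"
    unfolding schubert_cell_def using \<open>b \<in> borel n\<close> point[symmetric] by blast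
  then show ?thesis using schubert_cell_subset_schubert by blast
qed

text \<open>When \<open>n \<cdot> weight s J = r s\<close>, the \<open>\<lambda>\<^sub>s\<close>-fixed point \<open>e\<^sub>J\<close> is semistable through the
  invariant \<open>p\<^sub>J\<^sup>n\<close>, but its stabilizer is all of \<open>\<complex>\<^sup>*\<close>.\<close>

lemma semistable_ne_stable_if_balanced:
  assumes J: "J \<in> rsubsets n r" and balanced: "n * weight s J = r * s"
  shows "semistable n r s (schubert n r J) \<noteq> stable n r s (schubert n r J)"
proof -
  define e where "e = (\<lambda>I. if I = J then 1 else (0::complex))"
  define f where "f p = p J ^ n" for p :: "nat set \<Rightarrow> complex"
  have "is_form n r (n * 1) (\<lambda>p. \<Prod>I\<in>#replicate_mset n J. p I)"
    by (rule is_form_monomial) (use J in auto)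
  moreover have "(\<lambda>p. \<Prod>I\<in>#replicate_mset n J. p I) = f" by (simp add: f_def fun_eq_iff)
  ultimately have "is_form n r (n * 1) f" by simp
  moreover have "f (torus_act s t y) = t ^ (1 * r * s) * f y" for t y
  proof -
    have "f (torus_act s t y) = (t ^ weight s J) ^ n * f y"
      by (simp add: f_def torus_act_weight power_mult_distrib)
    also have "(t ^ weight s J) ^ n = t ^ (1 * r * s)"
      using balanced by (simp add: mult.commute flip: power_mult)
    finally show ?thesis .
  qed
  then have "invariant_on r s (schubert n r J) 1 f" by (simp add: invariant_on_def)
  moreover have "f e \<noteq> 0" by (simp add: f_def e_def)
  ultimately have "\<exists>k\<ge>1. \<exists>g. is_form n r (n * k) g \<and> invariant_on r s (schubert n r J) k g \<and> g e \<noteq> 0"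
    by (intro exI[of _ 1] conjI order_refl exI[of _ f])
  then have "e \<in> semistable n r s (schubert n r J)"
    using coordinate_point_in_schubert[OF J] unfolding semistable_def e_def by blast
  moreover have "torus_act s t e = (\<lambda>I. t ^ weight s J * e I)" for t
    by (auto simp: torus_act_weight e_def)
  then have "{t. t \<noteq> 0 \<and> (\<exists>c. torus_act s t e = (\<lambda>I. c * e I))} = UNIV - {0}" by auto
  then have "infinite {t. t \<noteq> 0 \<and> (\<exists>c. torus_act s t e = (\<lambda>I. c * e I))}"
    by (simp add: infinite_UNIV_char_0)
  then have "e \<notin> stable n r s (schubert n r J)" unfolding stable_def by blast
  ultimately show ?thesis by blast
qed

theorem corollary5p9:
  fixes n r s :: nat and J :: "nat set"
  assumes "2 \<le> n" and "1 \<le> r" and "r \<le> n - 1" and "1 \<le> s" and "s \<le> n - 1"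
    and "J \<in> rsubsets n r" and "pairing n r s J \<le> 0"
    and "\<forall>J'\<in>rsubsets n r. pairing n r s J' \<le> 0 \<longrightarrow> bruhat_le r J J'"
  shows "semistable n r s (schubert n r J) = stable n r s (schubert n r J) \<longleftrightarrow> \<not> n dvd r * s"
proof (cases "n dvd r * s")
  case True
  have "r < n" "s < n" using assms(1,3,5) by linarith+
  then have "n * weight s J = r * s"
    using minimal_weight_if_dvd[OF _ _ assms(6-8) True] by blast
  then show ?thesis using semistable_ne_stable_if_balanced[OF assms(6)] True by simp
next
  case False
  then show ?thesis using semistable_eq_stable_if_not_dvd[OF assms(6)] by simp
qed

end
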